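(* Let $G=(V,E)$ be a DAG with $n=|V|$ nodes that is $(e,d)$-reducible. Then $\Pi^{BW}_{cc}(G)\le\frac{e(e+1)}{2}+dn$. In particular, for every constant $\Delta$ there is a constant $C$ such that every DAG $G$ on $n\ge 3$ nodes with maximum indegree at most $\Delta$ satisfies $\Pi^{BW}_{cc}(G)\le C\left(\frac{n\log\log n}{\log n}\right)^2$.
   Context: For a DAG $G$, $\mathsf{depth}(G)$ is the number of nodes on a longest directed path; $G-S$ is $G$ with the nodes of $S$ and incident edges removed. $G$ is $(e,d)$-reducible if there is $S\subseteq V$ with $|S|\le e$ and $\mathsf{depth}(G-S)\le d$. A parallel-black sequential-white pebbling of $G=(V,E)$ is a sequence $P=(P_0,\ldots,P_t)$ of pairs $P_i=(P_i^B,P_i^W)$ of subsets of $V$ such that: $P_0=(\emptyset,\emptyset)$; $P_t^W=\emptyset$; $|P_i^W\setminus P_{i-1}^W|\le1$ for all $i\in[t]$; for all $i\in[t]$, if $x\in P_{i-1}^W\setminus P_i^W$ then $\mathsf{parents}(x)\subseteq P_{i-1}^W\cup P_{i-1}^B$; for all $i\in[t]$, if $x\in P_i^B\setminus P_{i-1}^B$ then $\mathsf{parents}(x)\subseteq P_{i-1}^W\cup P_{i-1}^B$; and every sink $x$ of $G$ lies in $P_z^W\cup P_z^B$ for some $z\le t$. $\Pi^{BW}_{cc}(G)=\min_P\sum_{i=1}^t|P_i^B\cup P_i^W|$ over all such pebblings. *)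

theory Defs
  imports Complex_Main
begin

definition is_dag :: "'a set \<Rightarrow> ('a \<times> 'a) set \<Rightarrow> bool" where
  "is_dag V E \<longleftrightarrow> finite V \<and> E \<subseteq> V \<times> V \<and> acyclic E"

definition parents :: "('a \<times> 'a) set \<Rightarrow> 'a \<Rightarrow> 'a set" where
  "parents E v = {u. (u, v) \<in> E}"

definition is_sink :: "'a set \<Rightarrow> ('a \<times> 'a) set \<Rightarrow> 'a \<Rightarrow> bool" where
  "is_sink V E v \<longleftrightarrow> v \<in> V \<and> (\<forall>w. (v, w) \<notin> E)"

definition is_path :: "'a set \<Rightarrow> ('a \<times> 'a) set \<Rightarrow> 'a list \<Rightarrow> bool" where
  "is_path V E xs \<longleftrightarrow> xs \<noteq> [] \<and> set xs \<subseteq> V \<and>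
     (\<forall>i. Suc i < length xs \<longrightarrow> (xs ! i, xs ! Suc i) \<in> E)"

text \<open>Number of nodes on a longest directed path (0 for the empty graph).\<close>
definition depth :: "'a set \<Rightarrow> ('a \<times> 'a) set \<Rightarrow> nat" where
  "depth V E = Sup (length ` {xs. is_path V E xs})"

text \<open>G - S : remove the nodes of S and incident edges.\<close>
definition del_edges :: "'a set \<Rightarrow> ('a \<times> 'a) set \<Rightarrow> 'a set \<Rightarrow> ('a \<times> 'a) set" where
  "del_edges V E S = E \<inter> ((V - S) \<times> (V - S))"

definition reducible :: "'a set \<Rightarrow> ('a \<times> 'a) set \<Rightarrow> nat \<Rightarrow> nat \<Rightarrow> bool" where
  "reducible V E e d \<longleftrightarrow> (\<exists>S. S \<subseteq> V \<and> card S \<le> e \<and> depth (V - S) (del_edges V E S) \<le> d)"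

text \<open>Parallel-black sequential-white pebbling P_0..P_t; P i = (black set, white set).\<close>
definition bw_pebbling :: "'a set \<Rightarrow> ('a \<times> 'a) set \<Rightarrow> (nat \<Rightarrow> 'a set \<times> 'a set) \<Rightarrow> nat \<Rightarrow> bool" where
  "bw_pebbling V E P t \<longleftrightarrow>
     P 0 = ({}, {}) \<and>
     snd (P t) = {} \<and>
     (\<forall>i\<le>t. fst (P i) \<subseteq> V \<and> snd (P i) \<subseteq> V) \<and>
     (\<forall>i\<in>{1..t}. card (snd (P i) - snd (P (i - 1))) \<le> 1) \<and>
     (\<forall>i\<in>{1..t}. \<forall>x \<in> snd (P (i - 1)) - snd (P i).
         parents E x \<subseteq> snd (P (i - 1)) \<union> fst (P (i - 1))) \<and>
     (\<forall>i\<in>{1..t}. \<forall>x \<in> fst (P i) - fst (P (i - 1)).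
         parents E x \<subseteq> snd (P (i - 1)) \<union> fst (P (i - 1))) \<and>
     (\<forall>x. is_sink V E x \<longrightarrow> (\<exists>z\<le>t. x \<in> snd (P z) \<union> fst (P z)))"

definition pebbling_cost :: "(nat \<Rightarrow> 'a set \<times> 'a set) \<Rightarrow> nat \<Rightarrow> nat" where
  "pebbling_cost P t = (\<Sum>i=1..t. card (fst (P i) \<union> snd (P i)))"

definition Pi_BW_cc :: "'a set \<Rightarrow> ('a \<times> 'a) set \<Rightarrow> nat" where
  "Pi_BW_cc V E = (LEAST c. \<exists>P t. bw_pebbling V E P t \<and> pebbling_cost P t = c)"

definition max_indeg_le :: "'a set \<Rightarrow> ('a \<times> 'a) set \<Rightarrow> nat \<Rightarrow> bool" where
  "max_indeg_le V E \<Delta> \<longleftrightarrow> (\<forall>v\<in>V. card (parents E v) \<le> \<Delta>)"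

end

theory Submission
  imports Defs "HOL-Real_Asymp.Real_Asymp" "HOL-Analysis.Complex_Transcendental"
begin

text \<open>If deleting a set S of e nodes leaves a graph of depth at most d, put white pebbles
  on the nodes of S one at a time (cost 1 + ... + e) and then, keeping them, let black pebbles
  sweep G - S in d parallel rounds, layer by layer according to the length of the longest path
  ending in a node; each round costs at most n.

  For indegree at most \<Delta>, Valiant's depth-reduction argument yields such sets: classify the
  edges by the most significant base-B digit in which the path heights of their endpoints
  differ, and delete the heads of the sparsest of q classes.  This gives e \<le> \<Delta> n / q and
  d \<le> n / B + B^(q-1), and B \<approx> (ln n)^2, q \<approx> ln n / (4 ln ln n) make both terms
  O((n ln ln n / ln n)^2).  Small graphs are covered by the trivial bound n^2.\<close>

lemma path_edges_trancl:
  assumes "is_path V E xs" "i < j" "j < length xs"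
  shows "(xs ! i, xs ! j) \<in> E\<^sup>+"
  using assms(2,3)
proof (induction j)
  case 0
  then show ?case by simp
next
  case (Suc j)
  have step: "(xs ! j, xs ! Suc j) \<in> E"
    using assms(1) Suc.prems unfolding is_path_def by blast
  show ?case
  proof (cases "i = j")
    case True
    then show ?thesis using step by auto
  next
    case False
    then show ?thesis using Suc step by (auto intro: trancl_into_trancl)
  qed
qed

lemma acyclic_path_distinct:
  assumes "acyclic E" "is_path V E xs"
  shows "distinct xs"
proof -
  have "xs ! i \<noteq> xs ! j" if "i < j" "j < length xs" for i j
    using path_edges_trancl[OF assms(2) that] assms(1) unfolding acyclic_def by auto
  then show ?thesis
    by (metis distinct_conv_nth linorder_neqE_nat)
qed

lemma dag_path_length_le_card:
  assumes "is_dag V E" "is_path V E xs"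
  shows "length xs \<le> card V"
proof -
  have "length xs = card (set xs)"
    using acyclic_path_distinct assms unfolding is_dag_def by (metis distinct_card)
  also have "\<dots> \<le> card V"
    using assms unfolding is_dag_def is_path_def by (meson card_mono)
  finally show ?thesis .
qed

lemma depth_leI:
  assumes "\<And>xs. is_path V E xs \<Longrightarrow> length xs \<le> D"
  shows "depth V E \<le> D"
proof (cases "Collect (is_path V E) = {}")
  case True
  then show ?thesis unfolding depth_def True by simp
next
  case False
  then show ?thesis unfolding depth_def using assms by (auto intro!: cSup_least)
qed

lemma path_length_le_depth:
  assumes "is_dag V E" "is_path V E xs"
  shows "length xs \<le> depth V E"
proof -
  have "bdd_above (length ` Collect (is_path V E))"
    using dag_path_length_le_card[OF assms(1)] by (auto intro!: bdd_aboveI)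
  then show ?thesis unfolding depth_def using assms(2) by (auto intro!: cSup_upper)
qed

lemma depth_le_card: "is_dag V E \<Longrightarrow> depth V E \<le> card V"
  by (rule depth_leI) (rule dag_path_length_le_card)

lemma is_dag_del_edges: "is_dag V E \<Longrightarrow> is_dag (V - S) (del_edges V E S)"
  unfolding is_dag_def del_edges_def by (auto intro: acyclic_subset)

lemma is_path_singleton: "v \<in> V \<Longrightarrow> is_path V E [v]"
  unfolding is_path_def by auto

lemma is_path_snoc:
  assumes "is_path V E xs" "(last xs, v) \<in> E" "v \<in> V"
  shows "is_path V E (xs @ [v])"
proof -
  have "xs \<noteq> []" using assms(1) unfolding is_path_def by auto
  have "((xs @ [v]) ! i, (xs @ [v]) ! Suc i) \<in> E" if "Suc i < length (xs @ [v])" for i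
  proof (cases "Suc i < length xs")
    case True
    then show ?thesis using assms(1) by (simp add: nth_append is_path_def)
  next
    case False
    then have "i = length xs - 1" using that by simp
    then have "(xs @ [v]) ! i = last xs" "(xs @ [v]) ! Suc i = v"
      using \<open>xs \<noteq> []\<close> by (auto simp: nth_append last_conv_nth)
    then show ?thesis using assms(2) by simp
  qed
  then show ?thesis using assms(1,3) unfolding is_path_def by auto
qed

definition path_height :: "'a set \<Rightarrow> ('a \<times> 'a) set \<Rightarrow> 'a \<Rightarrow> nat" where
  "path_height V E v = Max (length ` {xs. is_path V E xs \<and> last xs = v})"

lemma finite_path_lengths:
  assumes "is_dag V E"
  shows "finite (length ` {xs. is_path V E xs \<and> last xs = v})"
proof (rule finite_subset[OF _ finite_atMost])
  show "length ` {xs. is_path V E xs \<and> last xs = v} \<subseteq> {..card V}"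
    using dag_path_length_le_card[OF assms] by auto
qed

lemma path_height_attained:
  assumes "is_dag V E" "v \<in> V"
  shows "\<exists>xs. is_path V E xs \<and> last xs = v \<and> length xs = path_height V E v"
proof -
  have "length [v] \<in> length ` {xs. is_path V E xs \<and> last xs = v}"
    using is_path_singleton[OF assms(2)] by (intro imageI) simp
  then have "path_height V E v \<in> length ` {xs. is_path V E xs \<and> last xs = v}"
    unfolding path_height_def by (intro Max_in finite_path_lengths[OF assms(1)]) blast
  then show ?thesis by auto
qed

lemma path_length_le_path_height:
  assumes "is_dag V E" "is_path V E xs"
  shows "length xs \<le> path_height V E (last xs)"
  unfolding path_height_def using assms(2)
  by (intro Max_ge finite_path_lengths[OF assms(1)] imageI) simp

lemma path_height_pos:
  assumes "is_dag V E" "v \<in> V"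
  shows "1 \<le> path_height V E v"
  using path_length_le_path_height[OF assms(1) is_path_singleton[OF assms(2)]] by simp

lemma path_height_le_depth:
  assumes "is_dag V E" "v \<in> V"
  shows "path_height V E v \<le> depth V E"
proof -
  obtain xs where "is_path V E xs" "length xs = path_height V E v"
    using path_height_attained[OF assms] by blast
  then show ?thesis using path_length_le_depth[OF assms(1)] by metis
qed

lemma path_height_less:
  assumes dag: "is_dag V E" and uv: "(u, v) \<in> E"
  shows "path_height V E u < path_height V E v"
proof -
  have "u \<in> V" "v \<in> V" using dag uv unfolding is_dag_def by auto
  obtain xs where xs: "is_path V E xs" "last xs = u" "length xs = path_height V E u"
    using path_height_attained[OF dag \<open>u \<in> V\<close>] by blast
  have "is_path V E (xs @ [v])"
    using is_path_snoc[OF xs(1)] xs(2) uv \<open>v \<in> V\<close> by simp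
  from path_length_le_path_height[OF dag this] show ?thesis
    using xs by simp
qed

definition layered_pebbling :: "'a list \<Rightarrow> (nat \<Rightarrow> 'a set) \<Rightarrow> nat \<Rightarrow> nat \<Rightarrow> 'a set \<times> 'a set" where
  "layered_pebbling s L d i =
     (if i \<le> length s then ({}, set (take i s))
      else if i \<le> length s + d then (L (i - length s), set s)
      else ({}, {}))"

lemma layered_pebbling_white:
  "i \<le> length s \<Longrightarrow> layered_pebbling s L d i = ({}, set (take i s))"
  unfolding layered_pebbling_def by simp

lemma layered_pebbling_black:
  "L 0 = {} \<Longrightarrow> length s \<le> i \<Longrightarrow> i \<le> length s + d \<Longrightarrow>
    layered_pebbling s L d i = (L (i - length s), set s)"
  unfolding layered_pebbling_def by (cases "i = length s") auto

lemma layered_pebbling_final: "layered_pebbling s L d (length s + d + 1) = ({}, {})"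
  unfolding layered_pebbling_def by simp

lemma layered_pebbling_step:
  assumes EV: "E \<subseteq> V \<times> V" and L0: "L 0 = {}" and Ld: "V - set s \<subseteq> L d"
    and layered: "\<And>j u v. (u, v) \<in> E \<Longrightarrow> u \<notin> set s \<Longrightarrow> v \<in> L (Suc j) \<Longrightarrow> u \<in> L j"
    and m: "m \<le> length s + d"
  defines "P \<equiv> layered_pebbling s L d"
  shows "card (snd (P (Suc m)) - snd (P m)) \<le> 1 \<and>
      (\<forall>x \<in> snd (P m) - snd (P (Suc m)). parents E x \<subseteq> snd (P m) \<union> fst (P m)) \<and>
      (\<forall>x \<in> fst (P (Suc m)) - fst (P m). parents E x \<subseteq> snd (P m) \<union> fst (P m))"
proof -
  define k where "k = length s"
  note white = layered_pebbling_white[of _ s L d, folded P_def k_def]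
  note black = layered_pebbling_black[of L s _ d, OF L0, folded P_def k_def]
  consider (place_white) "m < k" | (advance_black) "k \<le> m" "m < k + d" | (clear) "m = k + d"
    using m unfolding k_def by linarith
  then show ?thesis
  proof cases
    case place_white
    then have "take (Suc m) s = take m s @ [s ! m]"
      unfolding k_def by (simp add: take_Suc_conv_app_nth)
    then have "snd (P (Suc m)) - snd (P m) \<subseteq> {s ! m}"
      using place_white white[of m] white[of "Suc m"] by auto
    then have "card (snd (P (Suc m)) - snd (P m)) \<le> 1"
      using card_mono[of "{s ! m}"] by simp
    moreover have "set (take m s) \<subseteq> set (take (Suc m) s)"
      by (simp add: set_take_subset_set_take)
    ultimately show ?thesis
      using place_white white[of m] white[of "Suc m"] by auto
  next
    case advance_black
    define j where "j = m - k"
    have "P m = (L j, set s)" "P (Suc m) = (L (Suc j), set s)"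
      using advance_black black[of m] black[of "Suc m"] unfolding j_def by (auto simp: Suc_diff_le)
    moreover have "parents E x \<subseteq> set s \<union> L j" if "x \<in> L (Suc j)" for x
      using layered[of _ x j] that unfolding parents_def by blast
    ultimately show ?thesis by auto
  next
    case clear
    then have "P m = (L d, set s)" "P (Suc m) = ({}, {})"
      using black[of m] layered_pebbling_final[of s L d] unfolding P_def k_def by auto
    moreover have "parents E x \<subseteq> V" for x
      using EV unfolding parents_def by auto
    ultimately show ?thesis
      using Ld by auto
  qed
qed

lemma bw_pebbling_layered_pebbling:
  assumes EV: "E \<subseteq> V \<times> V" and sV: "set s \<subseteq> V" and LV: "\<And>j. L j \<subseteq> V"
    and L0: "L 0 = {}" and Ld: "V - set s \<subseteq> L d"
    and layered: "\<And>j u v. (u, v) \<in> E \<Longrightarrow> u \<notin> set s \<Longrightarrow> v \<in> L (Suc j) \<Longrightarrow> u \<in> L j"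
  shows "bw_pebbling V E (layered_pebbling s L d) (length s + d + 1)"
proof -
  let ?P = "layered_pebbling s L d" and ?t = "length s + d + 1"
  have bounds: "fst (?P i) \<subseteq> V \<and> snd (?P i) \<subseteq> V" for i
    unfolding layered_pebbling_def using LV sV set_take_subset[of i s] by auto
  have steps: "card (snd (?P i) - snd (?P (i - 1))) \<le> 1 \<and>
      (\<forall>x \<in> snd (?P (i - 1)) - snd (?P i). parents E x \<subseteq> snd (?P (i - 1)) \<union> fst (?P (i - 1))) \<and>
      (\<forall>x \<in> fst (?P i) - fst (?P (i - 1)). parents E x \<subseteq> snd (?P (i - 1)) \<union> fst (?P (i - 1)))"
    if i: "i \<in> {1..?t}" for i
  proof -
    obtain m where "i = Suc m" "m \<le> length s + d"
      using i by (cases i) auto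
    then show ?thesis
      using layered_pebbling_step[OF EV L0 Ld layered, where m = m] by simp
  qed
  have sinks: "\<exists>z\<le>?t. x \<in> snd (?P z) \<union> fst (?P z)" if "is_sink V E x" for x
    using that layered_pebbling_black[of L s "length s + d" d, OF L0] Ld unfolding is_sink_def
    by (intro exI[of _ "length s + d"]) auto
  show ?thesis
    unfolding bw_pebbling_def
  proof (intro conjI)
    show "?P 0 = ({}, {})" "snd (?P ?t) = {}"
      using layered_pebbling_white[of 0 s L d] layered_pebbling_final[of s L d] by simp_all
  qed (use bounds steps sinks in blast)+
qed

lemma pebbling_cost_layered_pebbling:
  assumes "finite V" "set s \<subseteq> V" "\<And>j. L j \<subseteq> V"
  shows "pebbling_cost (layered_pebbling s L d) (length s + d + 1)
           \<le> (\<Sum>i=1..length s. i) + d * card V"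
proof -
  define k where "k = length s"
  define c where "c i = card (fst (layered_pebbling s L d i) \<union> snd (layered_pebbling s L d i))" for i
  have "(\<Sum>i=1..k. c i) \<le> (\<Sum>i=1..k. i)"
  proof (rule sum_mono)
    fix i assume "i \<in> {1..k}"
    then have "c i = card (set (take i s))"
      unfolding c_def layered_pebbling_def k_def by simp
    also have "\<dots> \<le> i"
      using card_length[of "take i s"] by simp
    finally show "c i \<le> i" .
  qed
  moreover have "(\<Sum>i=k+1..k+d. c i) \<le> (\<Sum>i=k+1..k+d. card V)"
    using assms unfolding c_def layered_pebbling_def k_def by (intro sum_mono card_mono) auto
  moreover have "c (k + d + 1) = 0"
    unfolding c_def layered_pebbling_def k_def by simp
  moreover have "(\<Sum>i=1..k+d+1. c i) = (\<Sum>i=1..k. c i) + (\<Sum>i=k+1..k+d. c i) + c (k + d + 1)"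
    using sum.ub_add_nat[of 1 k c d] by simp
  ultimately show ?thesis
    unfolding pebbling_cost_def c_def[symmetric] k_def[symmetric] by simp
qed

lemma Pi_BW_cc_le_pebbling_cost: "bw_pebbling V E P t \<Longrightarrow> Pi_BW_cc V E \<le> pebbling_cost P t"
  unfolding Pi_BW_cc_def by (intro Least_le) blast

lemma Pi_BW_cc_le_removal:
  assumes dag: "is_dag V E" and SV: "S \<subseteq> V" and dep: "depth (V - S) (del_edges V E S) \<le> d"
  shows "2 * Pi_BW_cc V E \<le> card S * (card S + 1) + 2 * d * card V"
proof -
  have finV: "finite V" and EV: "E \<subseteq> V \<times> V" using dag unfolding is_dag_def by auto
  obtain s where s: "set s = S" "distinct s"
    using finite_distinct_list finite_subset[OF SV finV] by blast
  define E' where "E' = del_edges V E S"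
  have dag': "is_dag (V - S) E'" unfolding E'_def using dag by (rule is_dag_del_edges)
  define L where "L j = {v \<in> V - S. path_height (V - S) E' v \<le> j}" for j
  have "L 0 = {}"
    unfolding L_def using path_height_pos[OF dag'] by fastforce
  moreover have "V - set s \<subseteq> L d"
    unfolding L_def E'_def using s path_height_le_depth[OF dag'] dep E'_def by fastforce
  moreover have "u \<in> L j" if "(u, v) \<in> E" "u \<notin> set s" "v \<in> L (Suc j)" for j u v
  proof -
    have "u \<in> V - S" "v \<in> V - S"
      using that EV s unfolding L_def by auto
    then have "path_height (V - S) E' u < path_height (V - S) E' v"
      using path_height_less[OF dag'] that(1) unfolding E'_def del_edges_def by blast
    then show ?thesis
      using \<open>u \<in> V - S\<close> that(3) unfolding L_def by auto
  qed
  ultimately have "bw_pebbling V E (layered_pebbling s L d) (length s + d + 1)"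
    using EV s SV by (intro bw_pebbling_layered_pebbling) (auto simp: L_def)
  then have "Pi_BW_cc V E \<le> (\<Sum>i=1..length s. i) + d * card V"
    using Pi_BW_cc_le_pebbling_cost pebbling_cost_layered_pebbling[of V s L d] finV s SV
    unfolding L_def by fastforce
  moreover have "2 * (\<Sum>i=1..length s. i) = card S * (card S + 1)"
    using gauss_sum_from_Suc_0[of "length s", where ?'a = nat] s distinct_card by fastforce
  ultimately show ?thesis by linarith
qed

lemma Pi_BW_cc_le_reducible:
  assumes "is_dag V E" "reducible V E e d"
  shows "real (Pi_BW_cc V E) \<le> real e * (real e + 1) / 2 + real d * real (card V)"
proof -
  obtain S where S: "S \<subseteq> V" "card S \<le> e" "depth (V - S) (del_edges V E S) \<le> d"
    using assms(2) unfolding reducible_def by blast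
  have "2 * Pi_BW_cc V E \<le> card S * (card S + 1) + 2 * d * card V"
    using Pi_BW_cc_le_removal[OF assms(1) S(1,3)] .
  also have "\<dots> \<le> e * (e + 1) + 2 * d * card V"
    using S(2) by (intro add_mono mult_mono) auto
  finally have "real (2 * Pi_BW_cc V E) \<le> real (e * (e + 1) + 2 * d * card V)"
    by (rule of_nat_mono)
  then show ?thesis by (simp add: field_simps)
qed

lemma Pi_BW_cc_le_square:
  assumes "is_dag V E"
  shows "real (Pi_BW_cc V E) \<le> real (card V) ^ 2"
proof -
  have "depth (V - V) (del_edges V E V) \<le> 0"
    by (rule depth_leI) (auto simp: is_path_def)
  then have "reducible V E (card V) 0"
    unfolding reducible_def by blast
  from Pi_BW_cc_le_reducible[OF assms this]
  have "real (Pi_BW_cc V E) \<le> real (card V) * (real (card V) + 1) / 2"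
    by simp
  also have "\<dots> \<le> real (card V) ^ 2"
    by (cases "card V") (auto simp: power2_eq_square field_simps)
  finally show ?thesis .
qed

lemma card_edges_le_max_indeg:
  assumes "finite V" "E \<subseteq> V \<times> V" "max_indeg_le V E \<Delta>"
  shows "card E \<le> \<Delta> * card V"
proof -
  have "E \<subseteq> (\<Union>v\<in>V. parents E v \<times> {v})"
    using assms(2) unfolding parents_def by auto
  moreover have "finite (\<Union>v\<in>V. parents E v \<times> {v})"
    using assms(1,2) unfolding parents_def
    by (intro finite_UN_I finite_cartesian_product) (auto intro: finite_subset)
  ultimately have "card E \<le> card (\<Union>v\<in>V. parents E v \<times> {v})"
    by (rule card_mono[rotated])
  also have "\<dots> \<le> (\<Sum>v\<in>V. card (parents E v \<times> {v}))"
    by (rule card_UN_le[OF assms(1)])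
  also have "\<dots> = (\<Sum>v\<in>V. card (parents E v))"
    by (simp add: card_cartesian_product)
  also have "\<dots> \<le> (\<Sum>v\<in>V. \<Delta>)"
    using assms(3) unfolding max_indeg_le_def by (intro sum_mono) auto
  finally show ?thesis by (simp add: mult.commute)
qed

lemma exists_small_class:
  assumes "finite A" "0 < q" "\<And>j. j < q \<Longrightarrow> F j \<subseteq> A"
    and "\<And>i j. i < q \<Longrightarrow> j < q \<Longrightarrow> i \<noteq> j \<Longrightarrow> F i \<inter> F j = {}"
  shows "\<exists>j<q. q * card (F j) \<le> card A"
proof (rule ccontr)
  assume "\<not> ?thesis"
  then have "(\<Sum>j<q. card A) < (\<Sum>j<q. q * card (F j))"
    using assms(2) by (intro sum_strict_mono) auto
  also have "\<dots> = q * card (\<Union>j<q. F j)"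
    unfolding sum_distrib_left[symmetric]
    by (rule arg_cong[where f = "(*) q"], rule card_UN_disjoint[symmetric])
      (use assms in \<open>auto intro: finite_subset\<close>)
  also have "\<dots> \<le> q * card A"
    using assms(1,3) by (intro mult_le_mono2 card_mono) auto
  finally show False by simp
qed

text \<open>Digit j is the most significant base-B digit in which x and y differ, and x has
  the smaller one.\<close>
definition split_digit :: "nat \<Rightarrow> nat \<Rightarrow> nat \<Rightarrow> nat \<Rightarrow> bool" where
  "split_digit B j x y \<longleftrightarrow> x div B ^ Suc j = y div B ^ Suc j \<and> x div B ^ j < y div B ^ j"

lemma split_digit_unique:
  assumes "split_digit B i x y" "split_digit B j x y"
  shows "i = j"
proof (rule ccontr)
  have no_split_above: "\<not> split_digit B j' x y" if "split_digit B i' x y" "i' < j'" for i' j'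
  proof -
    have "B ^ j' = B ^ Suc i' * B ^ (j' - Suc i')"
      using that(2) by (metis Suc_leI le_add_diff_inverse power_add)
    then have "x div B ^ j' = y div B ^ j'"
      using that(1) unfolding split_digit_def by (simp add: div_mult2_eq)
    then show ?thesis unfolding split_digit_def by simp
  qed
  assume "i \<noteq> j"
  then show False
    using assms no_split_above by (cases "i < j") auto
qed

text \<open>The number x with its base-B digit j deleted.\<close>
definition drop_digit :: "nat \<Rightarrow> nat \<Rightarrow> nat \<Rightarrow> nat" where
  "drop_digit B j x = x div B ^ Suc j * B ^ j + x mod B ^ j"

lemma drop_digit_less:
  assumes "0 < B" "x < y" "\<not> split_digit B j x y"
  shows "drop_digit B j x < drop_digit B j y"
proof -
  define p where "p = B ^ j"
  have p: "0 < p" "B ^ Suc j = p * B"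
    unfolding p_def using assms(1) by (simp_all add: mult.commute)
  have high: "x div (p * B) \<le> y div (p * B)" and low: "x div p \<le> y div p"
    using assms(2) by (simp_all add: div_le_mono)
  show ?thesis
  proof (cases "x div (p * B) < y div (p * B)")
    case True
    have "x div (p * B) * p + x mod p < (x div (p * B) + 1) * p"
      using p(1) by simp
    also have "\<dots> \<le> y div (p * B) * p"
      using True by (intro mult_right_mono) auto
    finally show ?thesis
      unfolding drop_digit_def p(2) p_def[symmetric] by (simp add: add.commute trans_less_add2)
  next
    case False
    then have "x div (p * B) = y div (p * B)" "x div p = y div p"
      using high low assms(3) unfolding split_digit_def p(2) p_def[symmetric] by auto
    moreover from this(2) have "x mod p < y mod p"
      using assms(2) by (metis add_less_cancel_left div_mult_mod_eq)
    ultimately show ?thesis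
      unfolding drop_digit_def p(2) p_def[symmetric] by simp
  qed
qed

lemma drop_digit_bound:
  assumes "0 < B" "x \<le> n"
  shows "drop_digit B j x < n div B ^ Suc j * B ^ j + B ^ j"
proof -
  have "x div B ^ Suc j * B ^ j \<le> n div B ^ Suc j * B ^ j"
    using assms(2) by (intro mult_right_mono div_le_mono) auto
  moreover have "x mod B ^ j < B ^ j"
    using assms(1) by simp
  ultimately show ?thesis
    unfolding drop_digit_def by linarith
qed

lemma drop_digit_range_le:
  assumes "1 \<le> B" "j < q"
  shows "real (n div B ^ Suc j * B ^ j + B ^ j) \<le> real n / real B + real B ^ (q - 1)"
proof -
  have "real (n div B ^ Suc j * B ^ j + B ^ j) \<le> real n / real (B ^ Suc j) * real (B ^ j) + real (B ^ j)"
    unfolding of_nat_add of_nat_mult using of_nat_div_le_of_nat[of n "B ^ Suc j"]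
    by (intro add_right_mono mult_right_mono) simp_all
  also have "\<dots> = real n / real B + real B ^ j"
    using assms(1) by simp
  also have "\<dots> \<le> real n / real B + real B ^ (q - 1)"
    using assms by (simp add: power_increasing)
  finally show ?thesis .
qed

lemma depth_le_potential:
  fixes f :: "'a \<Rightarrow> nat"
  assumes "\<And>u v. (u, v) \<in> E \<Longrightarrow> f u < f v" "\<And>v. v \<in> V \<Longrightarrow> f v < K"
  shows "depth V E \<le> K"
proof (rule depth_leI)
  fix xs assume xs: "is_path V E xs"
  have "i \<le> f (xs ! i)" if "i < length xs" for i
    using that
  proof (induction i)
    case (Suc i)
    then have "f (xs ! i) < f (xs ! Suc i)"
      using xs assms(1) unfolding is_path_def by blast
    then show ?case using Suc by simp
  qed simp
  moreover have "xs \<noteq> []" "set xs \<subseteq> V"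
    using xs unfolding is_path_def by auto
  ultimately have "length xs - 1 \<le> f (last xs)" "f (last xs) < K"
    using assms(2)[OF subsetD[OF _ last_in_set]] by (auto simp: last_conv_nth)
  then show "length xs \<le> K" by linarith
qed

lemma exists_depth_reducing_set:
  assumes dag: "is_dag V E" and indeg: "max_indeg_le V E \<Delta>" and B: "1 \<le> B" and q: "1 \<le> q"
  shows "\<exists>S\<subseteq>V. q * card S \<le> \<Delta> * card V \<and>
           real (depth (V - S) (del_edges V E S)) \<le> real (card V) / real B + real B ^ (q - 1)"
proof -
  have finV: "finite V" and EV: "E \<subseteq> V \<times> V" using dag unfolding is_dag_def by auto
  have finE: "finite E" using EV finV by (meson finite_SigmaI finite_subset)
  define h where "h = path_height V E"
  have h_le: "h v \<le> card V" if "v \<in> V" for v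
    using path_height_le_depth[OF dag that] depth_le_card[OF dag] unfolding h_def by linarith
  define F where "F j = {(u, v) \<in> E. split_digit B j (h u) (h v)}" for j
  obtain j where j: "j < q" "q * card (F j) \<le> card E"
    using exists_small_class[of E q F] finE q split_digit_unique unfolding F_def by fastforce
  define S where "S = snd ` F j"
  have "S \<subseteq> V" unfolding S_def F_def using EV by auto
  moreover have "q * card S \<le> \<Delta> * card V"
  proof -
    have "card S \<le> card (F j)"
      unfolding S_def by (rule card_image_le) (auto simp: F_def intro: finite_subset[OF _ finE])
    then show ?thesis
      using j(2) card_edges_le_max_indeg[OF finV EV indeg] by (meson le_trans mult_le_mono2)
  qed
  moreover have "depth (V - S) (del_edges V E S) \<le> card V div B ^ Suc j * B ^ j + B ^ j"
  proof (rule depth_le_potential[where f = "\<lambda>v. drop_digit B j (h v)"])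
    fix u v assume "(u, v) \<in> del_edges V E S"
    then have uv: "(u, v) \<in> E" "v \<notin> S" unfolding del_edges_def by auto
    then have "\<not> split_digit B j (h u) (h v)"
      unfolding S_def F_def by force
    then show "drop_digit B j (h u) < drop_digit B j (h v)"
      using drop_digit_less B path_height_less[OF dag uv(1)] unfolding h_def by simp
  next
    fix v assume "v \<in> V - S"
    then show "drop_digit B j (h v) < card V div B ^ Suc j * B ^ j + B ^ j"
      using drop_digit_bound B h_le by simp
  qed
  moreover have "real (card V div B ^ Suc j * B ^ j + B ^ j)
                   \<le> real (card V) / real B + real B ^ (q - 1)"
    using drop_digit_range_le B j(1) .
  ultimately show ?thesis
    by (intro exI[of _ S]) (auto intro: order_trans[OF of_nat_mono])
qed

lemma Pi_BW_cc_le_params: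
  assumes dag: "is_dag V E" and indeg: "max_indeg_le V E \<Delta>" and B: "1 \<le> B" and q: "1 \<le> q"
  shows "real (Pi_BW_cc V E) \<le> (real \<Delta> * real (card V) / real q) ^ 2
            + real (card V) * (real (card V) / real B + real B ^ (q - 1))"
proof -
  obtain S where S: "S \<subseteq> V" "q * card S \<le> \<Delta> * card V"
    "real (depth (V - S) (del_edges V E S)) \<le> real (card V) / real B + real B ^ (q - 1)"
    using exists_depth_reducing_set[OF dag indeg B q] by blast
  define e where "e = card S"
  define D where "D = depth (V - S) (del_edges V E S)"
  have "reducible V E e D" unfolding reducible_def e_def D_def using S(1) by blast
  then have "real (Pi_BW_cc V E) \<le> real e * (real e + 1) / 2 + real D * real (card V)"
    by (rule Pi_BW_cc_le_reducible[OF dag])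
  moreover have "real e * (real e + 1) / 2 \<le> real e ^ 2"
    by (cases e) (auto simp: power2_eq_square field_simps)
  moreover have "real e \<le> real \<Delta> * real (card V) / real q"
    using S(2) q unfolding e_def by (simp add: field_simps flip: of_nat_mult)
  then have "real e ^ 2 \<le> (real \<Delta> * real (card V) / real q) ^ 2"
    by (intro power_mono) auto
  moreover have "real D * real (card V) \<le> real (card V) * (real (card V) / real B + real B ^ (q - 1))"
    using mult_right_mono[OF S(3), of "real (card V)"] unfolding D_def by (simp add: mult.commute)
  ultimately show ?thesis by linarith
qed

lemma power_le_by_loglog:
  fixes x l lam :: real and B q :: nat
  assumes "0 < x" "l = ln x" "lam = ln l" "0 < l" "1 \<le> B" "real B \<le> l ^ 3"
    and "real q * (4 * lam) \<le> l" and "x powr (-1/4) \<le> (lam / l) ^ 2"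
  shows "x * real B ^ (q - 1) \<le> (x * lam / l) ^ 2"
proof -
  have "real B ^ (q - 1) \<le> (l ^ 3) ^ q"
    using assms(5,6) by (intro order_trans[OF power_increasing power_mono]) auto
  also have "\<dots> = exp (ln (l ^ 3)) ^ q"
    using assms(4) by simp
  also have "\<dots> = exp (real q * (3 * lam))"
    using assms(3,4) by (simp add: exp_of_nat_mult ln_realpow)
  also have "\<dots> \<le> exp (3 / 4 * l)"
    using assms(7) by (simp add: algebra_simps)
  also have "\<dots> = x powr (3 / 4)"
    using assms(1,2) by (simp add: powr_def)
  also have "\<dots> = x * x powr (-1/4)"
    using assms(1) powr_add[of x 1 "-1/4"] by simp
  also have "\<dots> \<le> x * (lam / l) ^ 2"
    using assms(1,8) by (intro mult_left_mono) auto
  finally have "x * real B ^ (q - 1) \<le> x * (x * (lam / l) ^ 2)"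
    using assms(1) by (intro mult_left_mono) auto
  then show ?thesis
    by (simp add: power_mult_distrib power_divide field_simps power2_eq_square)
qed

lemma loglog_parameters:
  fixes l lam :: real
  assumes lam1: "1 \<le> lam" and l8: "8 * lam \<le> l" and l3: "l ^ 2 + 1 \<le> l ^ 3"
  obtains B q :: nat where "1 \<le> B" "l ^ 2 \<le> real B" "real B \<le> l ^ 3"
    and "1 \<le> q" "real q * (4 * lam) \<le> l" "1 / real q \<le> 8 * lam / l"
proof
  have lpos: "8 \<le> l" using lam1 l8 by linarith
  have "real (nat \<lceil>l ^ 2\<rceil>) = of_int \<lceil>l ^ 2\<rceil>"
    by simp
  then show B: "l ^ 2 \<le> real (nat \<lceil>l ^ 2\<rceil>)" "real (nat \<lceil>l ^ 2\<rceil>) \<le> l ^ 3"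
    using l3 by linarith+
  have "(1::real) \<le> l ^ 2"
    using lpos by (simp add: one_le_power)
  then show "1 \<le> nat \<lceil>l ^ 2\<rceil>"
    using B(1) by linarith
  define q where "q = nat \<lfloor>l / (4 * lam)\<rfloor>"
  have "real q = of_int \<lfloor>l / (4 * lam)\<rfloor>"
    unfolding q_def using lam1 lpos by simp
  then have q_floor: "real q \<le> l / (4 * lam)" "l / (4 * lam) - 1 < real q"
    by linarith+
  then show "real q * (4 * lam) \<le> l"
    using lam1 by (simp add: field_simps)
  have "1 \<le> l / (8 * lam)"
    using lam1 l8 by (simp add: field_simps)
  then have q_lower: "l / (8 * lam) \<le> real q"
    using q_floor(2) lam1 by (simp add: field_simps)
  then have "1 \<le> real q"
    using \<open>1 \<le> l / (8 * lam)\<close> by linarith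
  then show "1 \<le> q" by simp
  show "1 / real q \<le> 8 * lam / l"
    using q_lower lam1 lpos \<open>1 \<le> real q\<close> by (simp add: field_simps)
qed

lemma Pi_BW_cc_le_loglog:
  fixes x l lam :: real
  assumes dag: "is_dag V E" and indeg: "max_indeg_le V E \<Delta>"
    and x: "x = real (card V)" and l: "l = ln x" and lam: "lam = ln l"
    and lam1: "1 \<le> lam" and l8: "8 * lam \<le> l" and l3: "l ^ 2 + 1 \<le> l ^ 3"
    and small: "x powr (-1/4) \<le> (lam / l) ^ 2"
  shows "real (Pi_BW_cc V E) \<le> (64 * real \<Delta> ^ 2 + 2) * (x * lam / l) ^ 2"
proof -
  have lpos: "8 \<le> l" using lam1 l8 by linarith
  then have xpos: "0 < x" using l x by (cases "x = 0") auto
  obtain B q :: nat where B: "1 \<le> B" "l ^ 2 \<le> real B" "real B \<le> l ^ 3"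
    and q: "1 \<le> q" "real q * (4 * lam) \<le> l" "1 / real q \<le> 8 * lam / l"
    using loglog_parameters[OF lam1 l8 l3] .
  have "real \<Delta> * x * (1 / real q) \<le> real \<Delta> * x * (8 * lam / l)"
    using q(3) xpos by (intro mult_left_mono) auto
  then have "(real \<Delta> * x / real q) ^ 2 \<le> (real \<Delta> * x * (8 * lam / l)) ^ 2"
    using xpos by (intro power_mono) auto
  then have term1: "(real \<Delta> * x / real q) ^ 2 \<le> 64 * real \<Delta> ^ 2 * (x * lam / l) ^ 2"
    by (simp add: power_mult_distrib field_simps)
  have "x / real B \<le> x / l ^ 2"
    using B xpos lpos by (intro divide_left_mono) auto
  also have "\<dots> \<le> x * (lam / l) ^ 2"
    using xpos lpos one_le_power[OF lam1, of 2] by (simp add: field_simps power_divide)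
  finally have "x * (x / real B) \<le> x * (x * (lam / l) ^ 2)"
    using xpos by (intro mult_left_mono) auto
  then have term2: "x * (x / real B) \<le> (x * lam / l) ^ 2"
    by (simp add: power_mult_distrib power_divide field_simps power2_eq_square)
  have term3: "x * real B ^ (q - 1) \<le> (x * lam / l) ^ 2"
    using power_le_by_loglog[OF xpos l lam _ B(1,3) q(2) small] lpos by simp
  show ?thesis
    using Pi_BW_cc_le_params[OF dag indeg B(1) q(1)] term1 term2 term3 x
    by (simp add: algebra_simps)
qed

lemma Pi_BW_cc_le_loglog_eventually:
  "\<exists>N. \<forall>(V :: 'a set) E. is_dag V E \<longrightarrow> max_indeg_le V E \<Delta> \<longrightarrow> N \<le> card V \<longrightarrow>
     real (Pi_BW_cc V E) \<le> (64 * real \<Delta> ^ 2 + 2) *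
       (real (card V) * ln (ln (real (card V))) / ln (real (card V))) ^ 2"
proof -
  have "eventually (\<lambda>x::real. 1 \<le> ln (ln x) \<and> 8 * ln (ln x) \<le> ln x \<and>
          ln x ^ 2 + 1 \<le> ln x ^ 3 \<and> x powr (-1/4) \<le> (ln (ln x) / ln x) ^ 2) at_top"
    by (intro eventually_conj) real_asymp+
  then obtain X where X: "\<And>x :: real. X \<le> x \<Longrightarrow> 1 \<le> ln (ln x) \<and> 8 * ln (ln x) \<le> ln x \<and>
          ln x ^ 2 + 1 \<le> ln x ^ 3 \<and> x powr (-1/4) \<le> (ln (ln x) / ln x) ^ 2"
    unfolding eventually_at_top_linorder by blast
  show ?thesis
  proof (intro exI[of _ "nat \<lceil>X\<rceil>"] allI impI)
    fix V :: "'a set" and E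
    assume dag: "is_dag V E" and indeg: "max_indeg_le V E \<Delta>" and "nat \<lceil>X\<rceil> \<le> card V"
    then have "X \<le> real (card V)" by linarith
    then show "real (Pi_BW_cc V E) \<le> (64 * real \<Delta> ^ 2 + 2) *
       (real (card V) * ln (ln (real (card V))) / ln (real (card V))) ^ 2"
      using X by (intro Pi_BW_cc_le_loglog[OF dag indeg refl refl refl]) auto
  qed
qed

lemma Pi_BW_cc_le_loglog_uniform:
  "\<exists>C. \<forall>(V :: 'a set) E. is_dag V E \<longrightarrow> max_indeg_le V E \<Delta> \<longrightarrow> 3 \<le> card V \<longrightarrow>
     real (Pi_BW_cc V E) \<le> C * (real (card V) * ln (ln (real (card V))) / ln (real (card V))) ^ 2"
proof -
  define Y where "Y m = (real m * ln (ln (real m)) / ln (real m)) ^ 2" for m :: nat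
  obtain N where N: "\<And>V :: 'a set. \<And>E. is_dag V E \<Longrightarrow> max_indeg_le V E \<Delta> \<Longrightarrow> N \<le> card V \<Longrightarrow>
      real (Pi_BW_cc V E) \<le> (64 * real \<Delta> ^ 2 + 2) * Y (card V)"
    using Pi_BW_cc_le_loglog_eventually[of \<Delta>] unfolding Y_def by blast
  define C where "C = 64 * real \<Delta> ^ 2 + 2 + (\<Sum>m\<in>{3..N}. real m ^ 2 / Y m)"
  have Y_pos: "0 < Y m" if "3 \<le> m" for m
  proof -
    have "ln 3 \<le> ln (real m)"
      using that by (subst ln_le_cancel_iff) auto
    then have "1 < ln (real m)"
      using ln3_gt_1 by linarith
    then show ?thesis unfolding Y_def using that by simp
  qed
  have "real (Pi_BW_cc V E) \<le> C * Y (card V)"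
    if dag: "is_dag V E" and indeg: "max_indeg_le V E \<Delta>" and n3: "3 \<le> card V" for V :: "'a set" and E
  proof (cases "card V \<le> N")
    case True
    have "real (card V) ^ 2 / Y (card V) \<le> C"
      unfolding C_def using True n3 Y_pos
      by (intro add_increasing order.refl member_le_sum) (auto intro: less_imp_le)
    then have "real (card V) ^ 2 \<le> C * Y (card V)"
      using Y_pos[OF n3] by (simp add: field_simps)
    then show ?thesis
      using Pi_BW_cc_le_square[OF dag] by linarith
  next
    case False
    have "(\<Sum>m\<in>{3..N}. real m ^ 2 / Y m) * Y (card V) \<ge> 0"
      using Y_pos n3 by (intro mult_nonneg_nonneg sum_nonneg) (auto intro: less_imp_le)
    then show ?thesis
      using N[OF dag indeg] False unfolding C_def by (simp add: distrib_right)
  qed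
  then show ?thesis unfolding Y_def by blast
qed

theorem mainTheorem14:
  shows "(\<forall>(V :: 'a set) E e d. is_dag V E \<longrightarrow> reducible V E e d \<longrightarrow>
            real (Pi_BW_cc V E) \<le> real e * (real e + 1) / 2 + real d * real (card V))
       \<and> (\<forall>\<Delta> :: nat. \<exists>C :: real. \<forall>(V :: nat set) E.
            is_dag V E \<longrightarrow> max_indeg_le V E \<Delta> \<longrightarrow> card V \<ge> 3 \<longrightarrow>
            real (Pi_BW_cc V E) \<le> C * (real (card V) * ln (ln (real (card V))) / ln (real (card V))) ^ 2)"
  using Pi_BW_cc_le_reducible Pi_BW_cc_le_loglog_uniform by blast

end
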